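(* Let $s$ be a fixed state, let $N\ge 1$, let $a_1(s),\dots,a_N(s)\in\mathbb{R}$ be centroids and $v_1(s),\dots,v_N(s)\in\mathbb{R}$ be values, and let $\beta>0$. Define, for $a\in\mathbb{R}$, $$\widehat Q_\beta(s,a)=\frac{\sum_{i=1}^N e^{-\beta|a-a_i(s)|}\,v_i(s)}{\sum_{i=1}^N e^{-\beta|a-a_i(s)|}}.$$ Then the supremum of $\widehat Q_\beta(s,\cdot)$ over the one-dimensional action space $\mathcal{A}=\mathbb{R}$ is attained at one of the centroids: $$\max_{a\in\mathbb{R}}\widehat Q_\beta(s,a)=\max_{i\in\{1,\dots,N\}}\widehat Q_\beta(s,a_i(s)).$$
   Context: A normalized (Gaussian) RBF value function, for a fixed state $s$, is a function of actions $a$ of the form $\widehat Q_\beta(s,a;\theta)=\frac{\sum_{i=1}^N e^{-\beta\|a-a_i(s;\theta)\|}v_i(s;\theta)}{\sum_{i=1}^N e^{-\beta\|a-a_i(s;\theta)\|}}$, where the centroids $a_i(s;\theta)$ and values $v_i(s;\theta)$ are outputs of a parametrized network (here treated as arbitrary fixed numbers for the fixed state $s$), and $\beta>0$ is a smoothing parameter. *)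

theory Defs
  imports "HOL-Analysis.Analysis"
begin

definition Qhat :: "real \<Rightarrow> nat \<Rightarrow> (nat \<Rightarrow> real) \<Rightarrow> (nat \<Rightarrow> real) \<Rightarrow> real \<Rightarrow> real" where
  "Qhat \<beta> N c v a =
     (\<Sum>i=1..N. exp (- \<beta> * \<bar>a - c i\<bar>) * v i) / (\<Sum>i=1..N. exp (- \<beta> * \<bar>a - c i\<bar>))"

end

theory Submission
  imports Defs
begin

text \<open>Subtract the best centroid value M from every v i: then Qhat a \<le> M says exactly that
  g a = \<Sum>i. exp (-\<beta> |a - c i|) (v i - M) \<le> 0, and g \<le> 0 holds at every centroid. Between two
  consecutive centroids (and beyond the extreme ones) g a = A exp (-\<beta> a) + B exp (\<beta> a) for
  constants A, B, i.e. exp (-\<beta> a) times an affine function of the monotone quantity exp (2\<beta> a);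
  an affine function that is \<le> 0 at both ends of an interval is \<le> 0 inside it, and beyond
  the extreme centroids one of A, B vanishes, so g keeps the sign it has at the nearest centroid.\<close>

definition rbf_sum :: "real \<Rightarrow> 'a set \<Rightarrow> ('a \<Rightarrow> real) \<Rightarrow> ('a \<Rightarrow> real) \<Rightarrow> real \<Rightarrow> real" where
  "rbf_sum \<beta> I c f x = (\<Sum>i\<in>I. exp (- \<beta> * \<bar>x - c i\<bar>) * f i)"

lemma rbf_sum_split:
  fixes \<beta> x :: real
  assumes "finite I" "L \<subseteq> I" "\<forall>i\<in>L. c i \<le> x" "\<forall>i\<in>I - L. x \<le> c i"
  shows "rbf_sum \<beta> I c f x =
    exp (- \<beta> * x) * (\<Sum>i\<in>L. exp (\<beta> * c i) * f i) + exp (\<beta> * x) * (\<Sum>i\<in>I - L. exp (- \<beta> * c i) * f i)"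
proof -
  have left: "exp (- \<beta> * \<bar>x - c i\<bar>) * f i = exp (- \<beta> * x) * (exp (\<beta> * c i) * f i)" if "i \<in> L" for i
    using that assms(3) by (simp add: algebra_simps flip: exp_add)
  have right: "exp (- \<beta> * \<bar>x - c i\<bar>) * f i = exp (\<beta> * x) * (exp (- \<beta> * c i) * f i)" if "i \<in> I - L" for i
    using that assms(4) by (simp add: algebra_simps flip: exp_add)
  have "rbf_sum \<beta> I c f x = (\<Sum>i\<in>L. exp (- \<beta> * \<bar>x - c i\<bar>) * f i) + (\<Sum>i\<in>I - L. exp (- \<beta> * \<bar>x - c i\<bar>) * f i)"
    unfolding rbf_sum_def using sum.subset_diff[OF assms(2,1)] by (simp add: add.commute)
  also have "\<dots> = exp (- \<beta> * x) * (\<Sum>i\<in>L. exp (\<beta> * c i) * f i) + exp (\<beta> * x) * (\<Sum>i\<in>I - L. exp (- \<beta> * c i) * f i)"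
    using sum.cong[OF refl left, of L] sum.cong[OF refl right, of "I - L"] by (simp add: sum_distrib_left)
  finally show ?thesis .
qed

lemma affine_nonpos_between:
  fixes A B s t u :: real
  assumes "s \<le> t" "t \<le> u" "A + B * s \<le> 0" "A + B * u \<le> 0"
  shows "A + B * t \<le> 0"
proof (cases "B \<ge> 0")
  case True
  then have "B * t \<le> B * u" using assms(2) by (simp add: mult_left_mono)
  with assms(4) show ?thesis by linarith
next
  case False
  then have "B * t \<le> B * s" using assms(1) by (simp add: mult_left_mono_neg)
  with assms(3) show ?thesis by linarith
qed

lemma exp_combination_nonpos_between:
  fixes A B \<beta> l x r :: real
  assumes "\<beta> \<ge> 0" "l \<le> x" "x \<le> r"
    and "exp (- \<beta> * l) * A + exp (\<beta> * l) * B \<le> 0" "exp (- \<beta> * r) * A + exp (\<beta> * r) * B \<le> 0"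
  shows "exp (- \<beta> * x) * A + exp (\<beta> * x) * B \<le> 0"
proof -
  have scaled: "exp (- \<beta> * y) * A + exp (\<beta> * y) * B = exp (- \<beta> * y) * (A + B * exp (2 * \<beta> * y))" for y
    by (simp add: algebra_simps flip: exp_add)
  have sign: "exp (- \<beta> * y) * A + exp (\<beta> * y) * B \<le> 0 \<longleftrightarrow> A + B * exp (2 * \<beta> * y) \<le> 0" for y
    unfolding scaled by (simp add: mult_le_0_iff)
  have "exp (2 * \<beta> * l) \<le> exp (2 * \<beta> * x)" "exp (2 * \<beta> * x) \<le> exp (2 * \<beta> * r)"
    using assms(1-3) by (simp_all add: mult_left_mono)
  from affine_nonpos_between[OF this assms(4,5)[unfolded sign]] show ?thesis
    unfolding sign .
qed

lemma finite_attains_max: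
  fixes f :: "'a \<Rightarrow> 'b::linorder"
  assumes "finite S" "S \<noteq> {}"
  obtains p where "p \<in> S" "\<forall>i\<in>S. f i \<le> f p"
proof -
  have "Max (f ` S) \<in> f ` S" using assms by simp
  then obtain p where "p \<in> S" "f p = Max (f ` S)" by (metis imageE)
  with assms(1) show thesis by (intro that) auto
qed

lemma finite_attains_min:
  fixes f :: "'a \<Rightarrow> 'b::linorder"
  assumes "finite S" "S \<noteq> {}"
  obtains q where "q \<in> S" "\<forall>i\<in>S. f q \<le> f i"
proof -
  have "Min (f ` S) \<in> f ` S" using assms by simp
  then obtain q where "q \<in> S" "f q = Min (f ` S)" by (metis imageE)
  with assms(1) show thesis by (intro that) auto
qed

lemma rbf_sum_nonpos_if_nonpos_at_centres:
  fixes \<beta> x :: real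
  assumes "finite I" "\<beta> \<ge> 0" "\<forall>j\<in>I. rbf_sum \<beta> I c f (c j) \<le> 0"
  shows "rbf_sum \<beta> I c f x \<le> 0"
proof -
  define L where "L = {i\<in>I. c i \<le> x}"
  define A where "A = (\<Sum>i\<in>L. exp (\<beta> * c i) * f i)"
  define B where "B = (\<Sum>i\<in>I - L. exp (- \<beta> * c i) * f i)"
  have L_le_x: "\<forall>i\<in>L. c i \<le> x" and x_le_R: "\<forall>i\<in>I - L. x \<le> c i"
    unfolding L_def by auto
  have "finite L" using assms(1) unfolding L_def by simp
  have split: "rbf_sum \<beta> I c f y = exp (- \<beta> * y) * A + exp (\<beta> * y) * B"
    if "\<forall>i\<in>L. c i \<le> y" "\<forall>i\<in>I - L. y \<le> c i" for y
    unfolding A_def B_def using rbf_sum_split[OF assms(1) _ that] L_def by blast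
  have at_centre: "exp (- \<beta> * c j) * A + exp (\<beta> * c j) * B \<le> 0"
    if "j \<in> I" "\<forall>i\<in>L. c i \<le> c j" "\<forall>i\<in>I - L. c j \<le> c i" for j
    using split[OF that(2,3), symmetric] assms(3) that(1) by simp
  consider (empty) "I = {}" | (right) "L = {}" "I - L \<noteq> {}" | (left) "L \<noteq> {}" "I - L = {}"
    | (both) "L \<noteq> {}" "I - L \<noteq> {}"
    unfolding L_def by blast
  then show ?thesis
  proof cases
    case empty
    then show ?thesis by (simp add: rbf_sum_def)
  next
    case right
    obtain q where q: "q \<in> I - L" "\<forall>i\<in>I - L. c q \<le> c i"
      using finite_attains_min[of "I - L" c] assms(1) right(2) by blast
    have "A = 0" unfolding A_def using right by simp
    then have "B \<le> 0"
      using at_centre[of q] q right by (simp add: mult_le_0_iff)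
    then show ?thesis
      using split[OF L_le_x x_le_R] \<open>A = 0\<close> by (simp add: mult_le_0_iff)
  next
    case left
    obtain p where p: "p \<in> L" "\<forall>i\<in>L. c i \<le> c p"
      using finite_attains_max[of L c] \<open>finite L\<close> left(1) by blast
    have "B = 0" unfolding B_def using left(2) by (simp only: sum.empty)
    then have "A \<le> 0"
      using at_centre[of p] p left unfolding L_def by (simp add: mult_le_0_iff)
    then show ?thesis
      using split[OF L_le_x x_le_R] \<open>B = 0\<close> by (simp add: mult_le_0_iff)
  next
    case both
    obtain p where p: "p \<in> L" "\<forall>i\<in>L. c i \<le> c p"
      using finite_attains_max[of L c] \<open>finite L\<close> both(1) by blast
    obtain q where q: "q \<in> I - L" "\<forall>i\<in>I - L. c q \<le> c i"
      using finite_attains_min[of "I - L" c] assms(1) both(2) by blast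
    have "c p \<le> x" "x \<le> c q" using p q L_le_x x_le_R by auto
    moreover have "exp (- \<beta> * c p) * A + exp (\<beta> * c p) * B \<le> 0"
      using at_centre[of p] p x_le_R \<open>c p \<le> x\<close> unfolding L_def by fastforce
    moreover have "exp (- \<beta> * c q) * A + exp (\<beta> * c q) * B \<le> 0"
      using at_centre[of q] q L_le_x \<open>x \<le> c q\<close> by fastforce
    ultimately show ?thesis
      using split[OF L_le_x x_le_R] exp_combination_nonpos_between[OF assms(2)] by simp
  qed
qed

lemma Qhat_le_iff_rbf_sum_nonpos:
  assumes "N \<ge> 1"
  shows "Qhat \<beta> N c v a \<le> M \<longleftrightarrow> rbf_sum \<beta> {1..N} c (\<lambda>i. v i - M) a \<le> 0"
proof -
  define D where "D = rbf_sum \<beta> {1..N} c (\<lambda>_. 1) a"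
  have "D > 0" unfolding D_def rbf_sum_def using assms by (intro sum_pos) auto
  have "rbf_sum \<beta> {1..N} c (\<lambda>i. v i - M) a = rbf_sum \<beta> {1..N} c v a - D * M"
    unfolding D_def rbf_sum_def by (simp add: right_diff_distrib sum_subtractf sum_distrib_right)
  also have "rbf_sum \<beta> {1..N} c v a = D * Qhat \<beta> N c v a"
    using \<open>D > 0\<close> unfolding Qhat_def D_def rbf_sum_def by simp
  finally have "rbf_sum \<beta> {1..N} c (\<lambda>i. v i - M) a = D * (Qhat \<beta> N c v a - M)"
    by (simp add: right_diff_distrib)
  with \<open>D > 0\<close> show ?thesis by (simp add: mult_le_0_iff)
qed

theorem theorem1:
  fixes N :: nat and c v :: "nat \<Rightarrow> real" and \<beta> :: real
  assumes "N \<ge> 1" and "\<beta> > 0"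
  shows "(\<forall>a. Qhat \<beta> N c v a \<le> (MAX i\<in>{1..N}. Qhat \<beta> N c v (c i)))
       \<and> (SUP a. Qhat \<beta> N c v a) = (MAX i\<in>{1..N}. Qhat \<beta> N c v (c i))"
proof -
  define M where "M = (MAX i\<in>{1..N}. Qhat \<beta> N c v (c i))"
  have at_centres: "rbf_sum \<beta> {1..N} c (\<lambda>i. v i - M) (c j) \<le> 0" if "j \<in> {1..N}" for j
    unfolding Qhat_le_iff_rbf_sum_nonpos[OF assms(1), symmetric] M_def using that by simp
  have bound: "Qhat \<beta> N c v a \<le> M" for a
    unfolding Qhat_le_iff_rbf_sum_nonpos[OF assms(1)]
    by (rule rbf_sum_nonpos_if_nonpos_at_centres) (use at_centres assms(2) in auto)
  have "M \<in> (\<lambda>i. Qhat \<beta> N c v (c i)) ` {1..N}"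
    unfolding M_def using assms(1) by (intro Max_in) auto
  then have "(SUP a. Qhat \<beta> N c v a) = M"
    using bound by (intro cSup_eq_maximum) auto
  with bound show ?thesis unfolding M_def by simp
qed

end
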